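(* Let $\mathcal{R}$ be a left-connected rewriting system over a signature $\Sigma$, let $L_i, L_j$ be left-hand sides of rules of $\mathcal{R}$, let $S_{ij\gamma}$ (with $\epsilon_{ij\gamma}\colon L_i+L_j\to S_{ij\gamma}$) be a hyperedge gluing and $S_{ij\gamma'}$ (with $\epsilon_{ij\gamma'}\colon S_{ij\gamma}\to S_{ij\gamma'}$) a subsequent node gluing, as described below. If $S_{ij\gamma'}$ yields a critical pair, then $S_{ij\gamma}$ yields a critical pair as well.
   Context: A signature $\Sigma$ is a set of triples $(x,n,m)$ (label, arity, coarity). A $\Sigma$-hypergraph $G=(V,E,s,t,l)$ has finite sets $V$ (nodes), $E$ (hyperedges), maps $s,t\colon E\to V^*$ (lists of sources/targets) and a labelling $l\colon E\to\Sigma$ sending a hyperedge with $n$ sources and $m$ targets to some $(x,n,m)$. Morphisms preserve sources, targets and labels; they form the category $\mathbf{Hyp}_\Sigma$, where colimits are computed componentwise and monos/epis are injective/surjective on nodes and hyperedges. Composition is written $f;g$; $\iota_1,\iota_2$ are coprojections. A hypergraph is discrete if it has no hyperedges. A path is a list of hyperedges $[e_1,\dots,e_n]$ with some target of $e_k$ equal to a source of $e_{k+1}$ for each $k$; it goes from $v$ to $v'$ if $v$ is a source of $e_1$ and $v'$ a target of $e_n$; a cycle is a path with some source of $e_1$ a target of $e_n$. In-degree (out-degree) of a node $v$: number of pairs $(e,i)$ with $v$ the $i$-th target (source) of $e$; $in(H)$, $out(H)$: nodes of in-degree $0$, out-degree $0$. $H$ is ma (monogamous acyclic) if it has no cycle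 and all in- and out-degrees are $\le 1$. A cospan $I\to H\leftarrow O$ with $I,O$ discrete is an ma-cospan if $H$ is ma and the legs are mono with images $in(H)$ and $out(H)$. $H$ is strongly connected if for all $x\in in(H)$, $y\in out(H)$ there is a path from $x$ to $y$. A left-connected rule is a span $L\xleftarrow{[i_L,o_L]}K=I+O\xrightarrow{[i_R,o_R]}R$ with $I,O$ discrete, $I\to L\leftarrow O$, $I\to R\leftarrow O$ ma-cospans, $[i_L,o_L]$ mono, $L$ strongly connected; a left-connected rewriting system is a finite set of such rules. Derivations (convex DPO rewriting with interface) between ma-cospans are given by a rule, a convex match (a mono whose image contains every hyperedge on every path between two of its nodes) and a double pushout diagram commuting with the interface; for left-connected systems they are determined by a rule and a mono match. A pre-critical pair is a pair of derivations from a common ma-cospan $n\to S\leftarrow m$ with matches $m_1\colon L_i\to S$, $m_2\colon L_j\to S$ such that $[m_1,m_2]$ is epi; it is parallel if $m_1$ factors through the pushout complement $C_2\to S$ of the second derivation and $m_2$ factors through the pushout complement $C_1\to S$ of the first; it is critical if not parallel. Hyperedge gluing: let $M$ be a nonempty set of pairs $(e,e')$, $e$ a hyperedge of $L_i$, $e'$ a hyperedge of $L_j$, with equal labels, no hyperedge occurring in two pairs; let $\gamma$ be the hypergraph with hyperedges $M$ and nodes the pairs $(v,v')$ that are $k$-th sources (or $k$-th targets) of $e,e'$ for some $(e,e')\in M$ and $k$, with projections $p_1^\gamma\colon\gamma\to L_i$, $p_2^\gamma\colon\gamma\to L_j$; $\epsilon_{ij\gamma}\colon L_i+L_j\to S_{ij\gamma}$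 is the coequaliser of $p_1^\gamma;\iota_1$ and $p_2^\gamma;\iota_2$. Node gluing: let $I_1=in(S_{ij\gamma})\cap\epsilon_{ij\gamma}(\iota_1(in(L_i)))$, $I_2=in(S_{ij\gamma})\cap\epsilon_{ij\gamma}(\iota_2(in(L_j)))$, $O_1=out(S_{ij\gamma})\cap\epsilon_{ij\gamma}(\iota_1(out(L_i)))$, $O_2=out(S_{ij\gamma})\cap\epsilon_{ij\gamma}(\iota_2(out(L_j)))$; let $N$ be a set of pairs in $I_1\times O_2$, or a set of pairs in $I_2\times O_1$, with no element occurring in two pairs; $\gamma'$ is the discrete hypergraph with nodes $N$ and projections $p_1^{\gamma'},p_2^{\gamma'}\colon\gamma'\to S_{ij\gamma}$, and $\epsilon_{ij\gamma'}\colon S_{ij\gamma}\to S_{ij\gamma'}$ is their coequaliser. $S_{ij\gamma}$ yields a critical pair if $\iota_1;\epsilon_{ij\gamma}$, $\iota_2;\epsilon_{ij\gamma}$ are mono, $in(S_{ij\gamma})\xrightarrow{\subseteq}S_{ij\gamma}\xleftarrow{\subseteq}out(S_{ij\gamma})$ is an ma-cospan, and the derivations from it with these matches form a critical pair; likewise for $S_{ij\gamma'}$ with the matches $\iota_k;\epsilon_{ij\gamma};\epsilon_{ij\gamma'}$. *)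

theory Defs
  imports Main
begin

text \<open>A label is a triple (x, n, m) of the signature; a signature is a set of such triples.\<close>

record ('v, 'e, 'l) hg =
  hV   :: "'v set"
  hE   :: "'e set"
  hsrc :: "'e \<Rightarrow> 'v list"
  htgt :: "'e \<Rightarrow> 'v list"
  hlab :: "'e \<Rightarrow> 'l \<times> nat \<times> nat"

definition hyp :: "('l \<times> nat \<times> nat) set \<Rightarrow> ('v, 'e, 'l) hg \<Rightarrow> bool" where
  "hyp sig G \<longleftrightarrow> finite (hV G) \<and> finite (hE G) \<and>
     (\<forall>e\<in>hE G. set (hsrc G e) \<subseteq> hV G \<and> set (htgt G e) \<subseteq> hV G \<and> hlab G e \<in> sig \<and>
        hlab G e = (fst (hlab G e), length (hsrc G e), length (htgt G e)))"

text \<open>Morphisms: pairs of maps (on nodes, on hyperedges), only relevant on the carriers.\<close>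
definition hom :: "('v, 'e, 'l) hg \<Rightarrow> ('w, 'f, 'l) hg \<Rightarrow> ('v \<Rightarrow> 'w) \<Rightarrow> ('e \<Rightarrow> 'f) \<Rightarrow> bool" where
  "hom G H fv fe \<longleftrightarrow> (\<forall>v\<in>hV G. fv v \<in> hV H) \<and>
     (\<forall>e\<in>hE G. fe e \<in> hE H \<and> hsrc H (fe e) = map fv (hsrc G e) \<and>
        htgt H (fe e) = map fv (htgt G e) \<and> hlab H (fe e) = hlab G e)"

definition mono_hom :: "('v, 'e, 'l) hg \<Rightarrow> ('w, 'f, 'l) hg \<Rightarrow> ('v \<Rightarrow> 'w) \<Rightarrow> ('e \<Rightarrow> 'f) \<Rightarrow> bool" where
  "mono_hom G H fv fe \<longleftrightarrow> hom G H fv fe \<and> inj_on fv (hV G) \<and> inj_on fe (hE G)"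

definition hg_sum :: "('v, 'e, 'l) hg \<Rightarrow> ('w, 'f, 'l) hg \<Rightarrow> ('v + 'w, 'e + 'f, 'l) hg" where
  "hg_sum G H = \<lparr> hV = hV G <+> hV H, hE = hE G <+> hE H,
     hsrc = case_sum (\<lambda>e. map Inl (hsrc G e)) (\<lambda>e. map Inr (hsrc H e)),
     htgt = case_sum (\<lambda>e. map Inl (htgt G e)) (\<lambda>e. map Inr (htgt H e)),
     hlab = case_sum (hlab G) (hlab H) \<rparr>"

definition discrete :: "'v set \<Rightarrow> ('v, 'e, 'l) hg" where
  "discrete X = \<lparr> hV = X, hE = {}, hsrc = (\<lambda>_. []), htgt = (\<lambda>_. []), hlab = (\<lambda>_. undefined) \<rparr>"

section \<open>Colimits (computed componentwise, as in Set)\<close>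

definition set_coeq :: "'a set \<Rightarrow> 'b set \<Rightarrow> ('a \<Rightarrow> 'b) \<Rightarrow> ('a \<Rightarrow> 'b) \<Rightarrow> 'c set \<Rightarrow> ('b \<Rightarrow> 'c) \<Rightarrow> bool" where
  "set_coeq A B f g Q q \<longleftrightarrow> q ` B = Q \<and>
     (let R = {(f a, g a) | a. a \<in> A} in
       \<forall>x\<in>B. \<forall>y\<in>B. q x = q y \<longleftrightarrow> (x, y) \<in> (R \<union> converse R)\<^sup>*)"

definition set_pushout :: "'a set \<Rightarrow> 'b set \<Rightarrow> 'c set \<Rightarrow> 'd set \<Rightarrow>
    ('a \<Rightarrow> 'b) \<Rightarrow> ('a \<Rightarrow> 'c) \<Rightarrow> ('b \<Rightarrow> 'd) \<Rightarrow> ('c \<Rightarrow> 'd) \<Rightarrow> bool" where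
  "set_pushout A B C D f g h k \<longleftrightarrow> (\<forall>a\<in>A. h (f a) = k (g a)) \<and> h ` B \<union> k ` C = D \<and>
     (let R = {(Inl (f a), Inr (g a)) | a. a \<in> A} in
       \<forall>x\<in>B <+> C. \<forall>y\<in>B <+> C. case_sum h k x = case_sum h k y \<longleftrightarrow> (x, y) \<in> (R \<union> converse R)\<^sup>*)"

definition coeq_hg :: "('a, 'e, 'l) hg \<Rightarrow> ('b, 'f, 'l) hg \<Rightarrow> ('a \<Rightarrow> 'b) \<Rightarrow> ('e \<Rightarrow> 'f)
    \<Rightarrow> ('a \<Rightarrow> 'b) \<Rightarrow> ('e \<Rightarrow> 'f) \<Rightarrow> ('c, 'g, 'l) hg \<Rightarrow> ('b \<Rightarrow> 'c) \<Rightarrow> ('f \<Rightarrow> 'g) \<Rightarrow> bool" where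
  "coeq_hg A B fv fe gv ge Q qv qe \<longleftrightarrow> hom A B fv fe \<and> hom A B gv ge \<and> hom B Q qv qe \<and>
     set_coeq (hV A) (hV B) fv gv (hV Q) qv \<and> set_coeq (hE A) (hE B) fe ge (hE Q) qe"

definition pushout_hg :: "('a, 'ea, 'l) hg \<Rightarrow> ('b, 'eb, 'l) hg \<Rightarrow> ('c, 'ec, 'l) hg \<Rightarrow> ('d, 'ed, 'l) hg
    \<Rightarrow> ('a \<Rightarrow> 'b) \<Rightarrow> ('ea \<Rightarrow> 'eb) \<Rightarrow> ('a \<Rightarrow> 'c) \<Rightarrow> ('ea \<Rightarrow> 'ec)
    \<Rightarrow> ('b \<Rightarrow> 'd) \<Rightarrow> ('eb \<Rightarrow> 'ed) \<Rightarrow> ('c \<Rightarrow> 'd) \<Rightarrow> ('ec \<Rightarrow> 'ed) \<Rightarrow> bool" where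
  "pushout_hg A B C D fv fe gv ge hv he kv ke \<longleftrightarrow>
     hom A B fv fe \<and> hom A C gv ge \<and> hom B D hv he \<and> hom C D kv ke \<and>
     set_pushout (hV A) (hV B) (hV C) (hV D) fv gv hv kv \<and>
     set_pushout (hE A) (hE B) (hE C) (hE D) fe ge he ke"

definition is_path :: "('v, 'e, 'l) hg \<Rightarrow> 'e list \<Rightarrow> bool" where
  "is_path G es \<longleftrightarrow> es \<noteq> [] \<and> set es \<subseteq> hE G \<and>
     (\<forall>k. Suc k < length es \<longrightarrow> set (htgt G (es ! k)) \<inter> set (hsrc G (es ! Suc k)) \<noteq> {})"

definition path_from_to :: "('v, 'e, 'l) hg \<Rightarrow> 'e list \<Rightarrow> 'v \<Rightarrow> 'v \<Rightarrow> bool" where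
  "path_from_to G es v w \<longleftrightarrow> is_path G es \<and> v \<in> set (hsrc G (hd es)) \<and> w \<in> set (htgt G (last es))"

definition is_cycle :: "('v, 'e, 'l) hg \<Rightarrow> 'e list \<Rightarrow> bool" where
  "is_cycle G es \<longleftrightarrow> is_path G es \<and> set (hsrc G (hd es)) \<inter> set (htgt G (last es)) \<noteq> {}"

definition indeg :: "('v, 'e, 'l) hg \<Rightarrow> 'v \<Rightarrow> nat" where
  "indeg G v = card {(e, i). e \<in> hE G \<and> i < length (htgt G e) \<and> htgt G e ! i = v}"

definition outdeg :: "('v, 'e, 'l) hg \<Rightarrow> 'v \<Rightarrow> nat" where
  "outdeg G v = card {(e, i). e \<in> hE G \<and> i < length (hsrc G e) \<and> hsrc G e ! i = v}"

definition inn :: "('v, 'e, 'l) hg \<Rightarrow> 'v set" where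
  "inn G = {v \<in> hV G. indeg G v = 0}"

definition outn :: "('v, 'e, 'l) hg \<Rightarrow> 'v set" where
  "outn G = {v \<in> hV G. outdeg G v = 0}"

definition ma :: "('v, 'e, 'l) hg \<Rightarrow> bool" where
  "ma G \<longleftrightarrow> (\<forall>es. \<not> is_cycle G es) \<and> (\<forall>v\<in>hV G. indeg G v \<le> 1 \<and> outdeg G v \<le> 1)"

text \<open>I -i-> H <-o- O with I, O discrete is an ma-cospan.\<close>
definition ma_cospan :: "'k set \<Rightarrow> 'k set \<Rightarrow> ('v, 'e, 'l) hg \<Rightarrow> ('k \<Rightarrow> 'v) \<Rightarrow> ('k \<Rightarrow> 'v) \<Rightarrow> bool" where
  "ma_cospan XI XO H fi fo \<longleftrightarrow> ma H \<and> inj_on fi XI \<and> fi ` XI = inn H \<and> inj_on fo XO \<and> fo ` XO = outn H"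

definition strongly_connected :: "('v, 'e, 'l) hg \<Rightarrow> bool" where
  "strongly_connected H \<longleftrightarrow> (\<forall>x\<in>inn H. \<forall>y\<in>outn H. \<exists>es. path_from_to H es x y)"

text \<open>A rule L <-[iL,oL]- I + O -[iR,oR]-> R with I, O discrete (given by node sets).\<close>
record ('k, 'v, 'e, 'l) rule =
  rI :: "'k set"
  rO :: "'k set"
  rL :: "('v, 'e, 'l) hg"
  rR :: "('v, 'e, 'l) hg"
  riL :: "'k \<Rightarrow> 'v"
  roL :: "'k \<Rightarrow> 'v"
  riR :: "'k \<Rightarrow> 'v"
  roR :: "'k \<Rightarrow> 'v"

definition left_connected_rule :: "('l \<times> nat \<times> nat) set \<Rightarrow> ('k, 'v, 'e, 'l) rule \<Rightarrow> bool" where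
  "left_connected_rule sig \<rho> \<longleftrightarrow> finite (rI \<rho>) \<and> finite (rO \<rho>) \<and> hyp sig (rL \<rho>) \<and> hyp sig (rR \<rho>) \<and>
     ma_cospan (rI \<rho>) (rO \<rho>) (rL \<rho>) (riL \<rho>) (roL \<rho>) \<and>
     ma_cospan (rI \<rho>) (rO \<rho>) (rR \<rho>) (riR \<rho>) (roR \<rho>) \<and>
     inj_on (case_sum (riL \<rho>) (roL \<rho>)) (rI \<rho> <+> rO \<rho>) \<and>
     strongly_connected (rL \<rho>)"

definition left_connected_system :: "('l \<times> nat \<times> nat) set \<Rightarrow> ('k, 'v, 'e, 'l) rule set \<Rightarrow> bool" where
  "left_connected_system sig \<R> \<longleftrightarrow> finite \<R> \<and> (\<forall>\<rho>\<in>\<R>. left_connected_rule sig \<rho>)"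

section \<open>Derivations (convex DPO rewriting with interface)\<close>

definition convex_match :: "('v, 'e, 'l) hg \<Rightarrow> ('a, 'b, 'l) hg \<Rightarrow> ('v \<Rightarrow> 'a) \<Rightarrow> ('e \<Rightarrow> 'b) \<Rightarrow> bool" where
  "convex_match L S mv me \<longleftrightarrow> mono_hom L S mv me \<and>
     (\<forall>v w es. v \<in> mv ` hV L \<and> w \<in> mv ` hV L \<and> path_from_to S es v w \<longrightarrow> set es \<subseteq> me ` hE L)"

text \<open>
  deriv sig rho S mv me C gv ge: there is a derivation from the ma-cospan in(S) -> S <- out(S)
  with rule rho, convex match (mv, me) : L -> S and pushout complement (gv, ge) : C -> S,
  i.e. a double pushout diagram
     L <- I+O -> R,   L -> S <- C -> T <- R,   I+O -> C
  with both squares pushouts, together with d = [dn, dm] : in(S) + out(S) -> C commuting with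
  the interface (d ; g = the inclusions), the result in(S) -> T <- out(S) (via d ; h) being an
  ma-cospan.  The pushout complement is represented with the carrier types of S (it embeds
  into S), the result T with carrier types large enough for any pushout.
\<close>
definition deriv :: "('l \<times> nat \<times> nat) set \<Rightarrow> ('k, 'v, 'e, 'l) rule \<Rightarrow> ('a, 'b, 'l) hg
    \<Rightarrow> ('v \<Rightarrow> 'a) \<Rightarrow> ('e \<Rightarrow> 'b) \<Rightarrow> ('a, 'b, 'l) hg \<Rightarrow> ('a \<Rightarrow> 'a) \<Rightarrow> ('b \<Rightarrow> 'b) \<Rightarrow> bool" where
  "deriv sig \<rho> S mv me C gv ge \<longleftrightarrow>
     hyp sig S \<and> ma S \<and> convex_match (rL \<rho>) S mv me \<and> hyp sig C \<and>
     (\<exists>(kv :: 'k + 'k \<Rightarrow> 'a) (dn :: 'a \<Rightarrow> 'a) (dm :: 'a \<Rightarrow> 'a)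
        (T :: (('v + 'a) set, ('e + 'b) set, 'l) hg) hv he rv re.
        pushout_hg (discrete (rI \<rho> <+> rO \<rho>) :: ('k + 'k, 'e, 'l) hg) (rL \<rho>) C S
          (case_sum (riL \<rho>) (roL \<rho>)) (\<lambda>_. undefined) kv (\<lambda>_. undefined) mv me gv ge \<and>
        pushout_hg (discrete (rI \<rho> <+> rO \<rho>) :: ('k + 'k, 'e, 'l) hg) (rR \<rho>) C T
          (case_sum (riR \<rho>) (roR \<rho>)) (\<lambda>_. undefined) kv (\<lambda>_. undefined) rv re hv he \<and>
        hyp sig T \<and>
        (\<forall>x\<in>inn S. dn x \<in> hV C \<and> gv (dn x) = x) \<and>
        (\<forall>x\<in>outn S. dm x \<in> hV C \<and> gv (dm x) = x) \<and>
        ma_cospan (inn S) (outn S) T (hv \<circ> dn) (hv \<circ> dm))"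

definition factors_through :: "('v, 'e, 'l) hg \<Rightarrow> ('a, 'b, 'l) hg \<Rightarrow> ('v \<Rightarrow> 'a) \<Rightarrow> ('e \<Rightarrow> 'b)
    \<Rightarrow> ('a \<Rightarrow> 'a) \<Rightarrow> ('b \<Rightarrow> 'b) \<Rightarrow> bool" where
  "factors_through L C mv me gv ge \<longleftrightarrow>
     (\<exists>hv he. hom L C hv he \<and> (\<forall>v\<in>hV L. gv (hv v) = mv v) \<and> (\<forall>e\<in>hE L. ge (he e) = me e))"

text \<open>
  S yields a critical pair for rules rho1, rho2 with matches m1, m2: the matches are mono,
  in(S) -> S <- out(S) is an ma-cospan, and the derivations from it with these matches form a
  pre-critical pair ([m1, m2] epi) which is not parallel.
\<close>
definition yields_cp :: "('l \<times> nat \<times> nat) set \<Rightarrow> ('k, 'v, 'e, 'l) rule \<Rightarrow> ('k, 'v, 'e, 'l) rule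
    \<Rightarrow> ('a, 'b, 'l) hg \<Rightarrow> ('v \<Rightarrow> 'a) \<Rightarrow> ('e \<Rightarrow> 'b) \<Rightarrow> ('v \<Rightarrow> 'a) \<Rightarrow> ('e \<Rightarrow> 'b) \<Rightarrow> bool" where
  "yields_cp sig \<rho>1 \<rho>2 S m1v m1e m2v m2e \<longleftrightarrow>
     mono_hom (rL \<rho>1) S m1v m1e \<and> mono_hom (rL \<rho>2) S m2v m2e \<and> hyp sig S \<and> ma S \<and>
     (\<exists>C1 g1v g1e C2 g2v g2e.
        deriv sig \<rho>1 S m1v m1e C1 g1v g1e \<and> deriv sig \<rho>2 S m2v m2e C2 g2v g2e \<and>
        hV S = m1v ` hV (rL \<rho>1) \<union> m2v ` hV (rL \<rho>2) \<and>
        hE S = m1e ` hE (rL \<rho>1) \<union> m2e ` hE (rL \<rho>2) \<and>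
        \<not> (factors_through (rL \<rho>1) C2 m1v m1e g2v g2e \<and>
            factors_through (rL \<rho>2) C1 m2v m2e g1v g1e))"

definition edge_gluing_pairs :: "('v, 'e, 'l) hg \<Rightarrow> ('v, 'e, 'l) hg \<Rightarrow> ('e \<times> 'e) set \<Rightarrow> bool" where
  "edge_gluing_pairs Li Lj M \<longleftrightarrow> M \<noteq> {} \<and> M \<subseteq> hE Li \<times> hE Lj \<and>
     (\<forall>(e, e')\<in>M. hlab Li e = hlab Lj e') \<and> inj_on fst M \<and> inj_on snd M"

text \<open>The hypergraph gamma; its projections to Li, Lj are (fst, fst) and (snd, snd).\<close>
definition gamma :: "('v, 'e, 'l) hg \<Rightarrow> ('v, 'e, 'l) hg \<Rightarrow> ('e \<times> 'e) set \<Rightarrow> ('v \<times> 'v, 'e \<times> 'e, 'l) hg" where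
  "gamma Li Lj M = \<lparr>
     hV = {(v, v'). \<exists>(e, e')\<in>M. \<exists>k.
            (k < length (hsrc Li e) \<and> k < length (hsrc Lj e') \<and> v = hsrc Li e ! k \<and> v' = hsrc Lj e' ! k) \<or>
            (k < length (htgt Li e) \<and> k < length (htgt Lj e') \<and> v = htgt Li e ! k \<and> v' = htgt Lj e' ! k)},
     hE = M,
     hsrc = (\<lambda>(e, e'). zip (hsrc Li e) (hsrc Lj e')),
     htgt = (\<lambda>(e, e'). zip (htgt Li e) (htgt Lj e')),
     hlab = (\<lambda>(e, e'). hlab Li e) \<rparr>"

definition node_gluing_pairs :: "('v, 'e, 'l) hg \<Rightarrow> ('v, 'e, 'l) hg \<Rightarrow> ('a, 'b, 'l) hg
    \<Rightarrow> ('v + 'v \<Rightarrow> 'a) \<Rightarrow> ('a \<times> 'a) set \<Rightarrow> bool" where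
  "node_gluing_pairs Li Lj S epsv N \<longleftrightarrow>
     (let I1 = inn S \<inter> epsv ` Inl ` inn Li; I2 = inn S \<inter> epsv ` Inr ` inn Lj;
          O1 = outn S \<inter> epsv ` Inl ` outn Li; O2 = outn S \<inter> epsv ` Inr ` outn Lj in
      (N \<subseteq> I1 \<times> O2 \<or> N \<subseteq> I2 \<times> O1) \<and>
      (\<forall>p\<in>N. \<forall>q\<in>N. p \<noteq> q \<longrightarrow> {fst p, snd p} \<inter> {fst q, snd q} = {}))"

end

theory Submission
  imports Defs
begin

text \<open>
  The node gluing \<open>q : S \<rightarrow> S'\<close> is injective on hyperedges and only identifies input nodes
  with output nodes of \<open>S\<close>. Hence each derivation from \<open>S'\<close> with match \<open>q \<circ> m\<close> lifts to
  one from \<open>S\<close> with match \<open>m\<close>: the pushout complement \<open>C\<close> of \<open>m\<close> (delete the matched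
  hyperedges and the matched non-interface nodes) embeds into the pushout complement \<open>C'\<close> of
  \<open>q \<circ> m\<close>, which makes \<open>C\<close> dangling-free and \<open>m\<close> convex, and the pushout \<open>T\<close> of \<open>R\<close> and
  \<open>C\<close> maps edge-injectively into the result \<open>T'\<close> of the derivation from \<open>S'\<close>, so \<open>T\<close> is
  monogamous acyclic. Monogamy of \<open>S\<close> and the fact that the rule interfaces are exactly the
  inputs and outputs of \<open>L\<close> and \<open>R\<close> show that the inputs and outputs of \<open>T\<close> are those of
  \<open>S\<close>. Composing with \<open>C \<rightarrow> C'\<close>, a witness that the two derivations from \<open>S\<close> are parallel
  yields one for the derivations from \<open>S'\<close>; so being a critical pair reflects along \<open>q\<close>.
\<close>

definition span_rel :: "'k set \<Rightarrow> ('k \<Rightarrow> 'b) \<Rightarrow> ('k \<Rightarrow> 'c) \<Rightarrow> (('b + 'c) \<times> ('b + 'c)) set" where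
  "span_rel A f g = {(Inl (f a), Inr (g a)) | a. a \<in> A}"

abbreviation span_equiv :: "'k set \<Rightarrow> ('k \<Rightarrow> 'b) \<Rightarrow> ('k \<Rightarrow> 'c) \<Rightarrow> (('b + 'c) \<times> ('b + 'c)) set" where
  "span_equiv A f g \<equiv> (span_rel A f g \<union> (span_rel A f g)\<inverse>)\<^sup>*"

lemma equiv_span_equiv: "equiv UNIV (span_equiv A f g)"
  by (simp add: equiv_def refl_rtrancl sym_rtrancl sym_Un_converse trans_rtrancl)

lemma equiv_closure_fun_eq:
  assumes "(x, y) \<in> (R \<union> R\<inverse>)\<^sup>*" and "\<And>a b. (a, b) \<in> R \<Longrightarrow> F a = F b"
  shows "F x = F y"
  using assms(1) by induction (auto dest: assms(2))

lemma span_equiv_InlD: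
  assumes "inj_on g A" and "(Inl b, y) \<in> span_equiv A f g"
  shows "y = Inl b \<or> (\<exists>a\<in>A. f a = b \<and> y = Inr (g a))"
  using assms(2)
proof induction
  case (step y z)
  then show ?case
    using assms(1) by (auto simp: span_rel_def dest: inj_onD)
qed simp

lemma span_equiv_InrD:
  assumes "inj_on f A" and "(Inr c, y) \<in> span_equiv A f g"
  shows "y = Inr c \<or> (\<exists>a\<in>A. g a = c \<and> y = Inl (f a))"
  using assms(2)
proof induction
  case (step y z)
  then show ?case
    using assms(1) by (auto simp: span_rel_def dest: inj_onD)
qed simp

lemma span_equiv_Inl_first_step:
  assumes "(Inl b, y) \<in> span_equiv A f g" and "y \<noteq> Inl b"
  obtains a where "a \<in> A" "f a = b" "(Inr (g a), y) \<in> span_equiv A f g"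
  using assms by (cases rule: converse_rtranclE) (auto simp: span_rel_def)

lemma span_equiv_Inr_first_step:
  assumes "(Inr c, y) \<in> span_equiv A f g" and "y \<noteq> Inr c"
  obtains a where "a \<in> A" "g a = c" "(Inl (f a), y) \<in> span_equiv A f g"
  using assms by (cases rule: converse_rtranclE) (auto simp: span_rel_def)

lemma span_equiv_Inr_InrD:
  assumes "inj_on g A" and "(Inr c, Inr c') \<in> span_equiv A f g" and "c \<noteq> c'"
  obtains a a' where "a \<in> A" "a' \<in> A" "g a = c" "g a' = c'" "f a = f a'"
proof -
  obtain a where a: "a \<in> A" "g a = c" "(Inl (f a), Inr c') \<in> span_equiv A f g"
    using span_equiv_Inr_first_step[OF assms(2)] assms(3) by blast
  then show thesis
    using span_equiv_InlD[OF assms(1) a(3)] that by auto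
qed

lemma set_pushout_iff:
  "set_pushout A B C D f g h k \<longleftrightarrow> (\<forall>a\<in>A. h (f a) = k (g a)) \<and> h ` B \<union> k ` C = D \<and>
     (\<forall>x\<in>B <+> C. \<forall>y\<in>B <+> C. case_sum h k x = case_sum h k y \<longleftrightarrow> (x, y) \<in> span_equiv A f g)"
  unfolding set_pushout_def span_rel_def Let_def ..

lemma set_pushout_commutes: "set_pushout A B C D f g h k \<Longrightarrow> a \<in> A \<Longrightarrow> h (f a) = k (g a)"
  unfolding set_pushout_iff by blast

lemma set_pushout_jointly_surj: "set_pushout A B C D f g h k \<Longrightarrow> h ` B \<union> k ` C = D"
  unfolding set_pushout_iff by blast

lemma set_pushout_eq_iff:
  "set_pushout A B C D f g h k \<Longrightarrow> x \<in> B <+> C \<Longrightarrow> y \<in> B <+> C \<Longrightarrow>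
     case_sum h k x = case_sum h k y \<longleftrightarrow> (x, y) \<in> span_equiv A f g"
  unfolding set_pushout_iff by blast

lemma set_pushout_cross_eqE:
  assumes "set_pushout A B C D f g h k" "b \<in> B" "c \<in> C" "h b = k c"
  obtains a where "a \<in> A" "f a = b"
proof -
  have "(Inl b, Inr c) \<in> span_equiv A f g"
    using set_pushout_eq_iff[OF assms(1) InlI[OF assms(2)] InrI[OF assms(3)]] assms(4) by simp
  then show thesis
    by (rule span_equiv_Inl_first_step) (use that in auto)
qed

lemma set_pushout_inj_on_right:
  assumes "set_pushout A B C D f g h k" "inj_on f A"
  shows "inj_on k C"
proof (rule inj_onI)
  fix c c'
  assume c: "c \<in> C" "c' \<in> C" "k c = k c'"
  then have "(Inr c, Inr c') \<in> span_equiv A f g"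
    using set_pushout_eq_iff[OF assms(1) InrI[OF c(1)] InrI[OF c(2)]] by simp
  from span_equiv_InrD[OF assms(2) this] show "c = c'"
    by simp
qed

lemma set_pushout_empty:
  assumes "set_pushout {} B C D f g h k"
  shows "inj_on h B" "inj_on k C" "\<And>b c. b \<in> B \<Longrightarrow> c \<in> C \<Longrightarrow> h b \<noteq> k c" "h ` B \<union> k ` C = D"
proof -
  have eq_iff: "case_sum h k x = case_sum h k y \<longleftrightarrow> x = y" if "x \<in> B <+> C" "y \<in> B <+> C" for x y
    using set_pushout_eq_iff[OF assms that] by (simp add: span_rel_def)
  show "inj_on h B"
    by (rule inj_onI) (use eq_iff[of "Inl x" "Inl y" for x y] in auto)
  show "inj_on k C"
    by (rule inj_onI) (use eq_iff[of "Inr x" "Inr y" for x y] in auto)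
  show "\<And>b c. b \<in> B \<Longrightarrow> c \<in> C \<Longrightarrow> h b \<noteq> k c"
    using eq_iff[of "Inl b" "Inr c" for b c] by auto
  show "h ` B \<union> k ` C = D"
    using set_pushout_jointly_surj[OF assms] .
qed

lemma set_pushoutI:
  assumes "\<And>a. a \<in> A \<Longrightarrow> h (f a) = k (g a)" "h ` B \<union> k ` C = D" "inj_on h B" "inj_on k C"
    "\<And>b c. b \<in> B \<Longrightarrow> c \<in> C \<Longrightarrow> h b = k c \<Longrightarrow> \<exists>a\<in>A. f a = b \<and> g a = c"
  shows "set_pushout A B C D f g h k"
  unfolding set_pushout_iff
proof (intro conjI ballI iffI)
  fix x y
  assume "(x, y) \<in> span_equiv A f g"
  then show "case_sum h k x = case_sum h k y"
    by (rule equiv_closure_fun_eq) (auto simp: span_rel_def assms(1))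
next
  have step: "(Inl b, Inr c) \<in> span_equiv A f g" if "b \<in> B" "c \<in> C" "h b = k c" for b c
    using assms(5)[OF that] by (auto simp: span_rel_def)
  have sym: "(y, x) \<in> span_equiv A f g" if "(x, y) \<in> span_equiv A f g" for x y
    using equiv_span_equiv[of A f g] that unfolding equiv_def sym_def by blast
  fix x y
  assume "x \<in> B <+> C" "y \<in> B <+> C" "case_sum h k x = case_sum h k y"
  then show "(x, y) \<in> span_equiv A f g"
    by (auto dest: inj_onD[OF assms(3)] inj_onD[OF assms(4)] step intro: sym)
qed (use assms(1,2) in auto)

lemma hom_comp: "hom G H fv fe \<Longrightarrow> hom H K gv ge \<Longrightarrow> hom G K (gv \<circ> fv) (ge \<circ> fe)"
  unfolding hom_def by auto

lemma discrete_simps [simp]: "hV (discrete X) = X" "hE (discrete X) = {}"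
  by (simp_all add: discrete_def)

lemma hom_discrete: "hom (discrete X) G fv fe \<longleftrightarrow> fv ` X \<subseteq> hV G"
  unfolding hom_def discrete_def by auto

lemma hom_Inl: "hom G (hg_sum G H) Inl Inl"
  and hom_Inr: "hom H (hg_sum G H) Inr Inr"
  unfolding hom_def hg_sum_def by auto

lemma mono_hom_if_comp_mono:
  assumes "hom G H fv fe" "mono_hom G K (gv \<circ> fv) (ge \<circ> fe)"
  shows "mono_hom G H fv fe"
  using assms inj_on_imageI2 unfolding mono_hom_def by metis

definition hg_rev :: "('v, 'e, 'l) hg \<Rightarrow> ('v, 'e, 'l) hg" where
  "hg_rev G = G\<lparr>hsrc := htgt G, htgt := hsrc G\<rparr>"

lemma hg_rev_simps [simp]:
  "hV (hg_rev G) = hV G" "hE (hg_rev G) = hE G" "hsrc (hg_rev G) = htgt G" "htgt (hg_rev G) = hsrc G"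
  "hlab (hg_rev G) = hlab G"
  by (simp_all add: hg_rev_def)

lemma indeg_hg_rev [simp]: "indeg (hg_rev G) v = outdeg G v"
  and outdeg_hg_rev [simp]: "outdeg (hg_rev G) v = indeg G v"
  by (simp_all add: indeg_def outdeg_def)

lemma inn_hg_rev [simp]: "inn (hg_rev G) = outn G"
  and outn_hg_rev [simp]: "outn (hg_rev G) = inn G"
  by (simp_all add: inn_def outn_def)

lemma hom_hg_rev [simp]: "hom (hg_rev G) (hg_rev H) fv fe \<longleftrightarrow> hom G H fv fe"
  unfolding hom_def by auto

lemma mono_hom_hg_rev [simp]: "mono_hom (hg_rev G) (hg_rev H) fv fe \<longleftrightarrow> mono_hom G H fv fe"
  unfolding mono_hom_def by simp

lemma finite_occurrences:
  "finite (hE G) \<Longrightarrow> finite {(e, i). e \<in> hE G \<and> i < length (f e) \<and> P e i}"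
  by (rule finite_subset[of _ "SIGMA e:hE G. {..<length (f e)}"]) auto

definition targets :: "('v, 'e, 'l) hg \<Rightarrow> 'v set" where
  "targets G = (\<Union>e\<in>hE G. set (htgt G e))"

lemma inn_eq:
  assumes "finite (hE G)"
  shows "inn G = hV G - targets G"
proof (rule set_eqI)
  fix v
  have "indeg G v = 0 \<longleftrightarrow> (\<forall>e\<in>hE G. v \<notin> set (htgt G e))"
    using finite_occurrences[OF assms, of "htgt G" "\<lambda>e i. htgt G e ! i = v"]
    unfolding indeg_def by (auto simp: in_set_conv_nth)
  then show "v \<in> inn G \<longleftrightarrow> v \<in> hV G - targets G"
    unfolding inn_def targets_def by auto
qed

lemma indeg_le_1_target_unique:
  assumes "finite (hE G)" "indeg G v \<le> 1" "e \<in> hE G" "e' \<in> hE G"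
    "v \<in> set (htgt G e)" "v \<in> set (htgt G e')"
  shows "e = e'"
proof (rule ccontr)
  assume "e \<noteq> e'"
  obtain i i' where "i < length (htgt G e)" "htgt G e ! i = v" "i' < length (htgt G e')" "htgt G e' ! i' = v"
    using assms(5,6) by (auto simp: in_set_conv_nth)
  with assms(3,4) have "{(e, i), (e', i')} \<subseteq> {(e, i). e \<in> hE G \<and> i < length (htgt G e) \<and> htgt G e ! i = v}"
    by auto
  from card_mono[OF finite_occurrences[OF assms(1)] this] \<open>e \<noteq> e'\<close> assms(2) show False
    unfolding indeg_def by simp
qed

lemma indeg_le_hom:
  assumes "hom G H fv fe" "inj_on fe (hE G)" "finite (hE H)"
  shows "indeg G v \<le> indeg H (fv v)"
  unfolding indeg_def
proof (rule card_inj_on_le[where f = "\<lambda>(e, i). (fe e, i)"])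
  show "inj_on (\<lambda>(e, i). (fe e, i)) {(e, i). e \<in> hE G \<and> i < length (htgt G e) \<and> htgt G e ! i = v}"
    using assms(2) by (auto simp: inj_on_def)
  show "(\<lambda>(e, i). (fe e, i)) ` {(e, i). e \<in> hE G \<and> i < length (htgt G e) \<and> htgt G e ! i = v}
    \<subseteq> {(e, i). e \<in> hE H \<and> i < length (htgt H e) \<and> htgt H e ! i = fv v}"
    using assms(1) unfolding hom_def by auto
qed (rule finite_occurrences[OF assms(3)])

lemma outdeg_le_hom:
  assumes "hom G H fv fe" "inj_on fe (hE G)" "finite (hE H)"
  shows "outdeg G v \<le> outdeg H (fv v)"
  using indeg_le_hom[of "hg_rev G" "hg_rev H"] assms by simp

lemma hom_is_path:
  assumes "hom G H fv fe" "is_path G es"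
  shows "is_path H (map fe es)"
  unfolding is_path_def
proof (intro conjI allI impI)
  have es: "es \<noteq> []" "set es \<subseteq> hE G"
    "\<And>k. Suc k < length es \<Longrightarrow> set (htgt G (es ! k)) \<inter> set (hsrc G (es ! Suc k)) \<noteq> {}"
    using assms(2) unfolding is_path_def by auto
  show "map fe es \<noteq> []" "set (map fe es) \<subseteq> hE H"
    using es(1,2) assms(1) unfolding hom_def by auto
  fix k
  assume k: "Suc k < length (map fe es)"
  then have "es ! k \<in> hE G" "es ! Suc k \<in> hE G"
    using es(2) nth_mem[of k es] nth_mem[of "Suc k" es] by auto
  with assms(1) have "htgt H (fe (es ! k)) = map fv (htgt G (es ! k))"
    "hsrc H (fe (es ! Suc k)) = map fv (hsrc G (es ! Suc k))"
    unfolding hom_def by auto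
  with es(3)[of k] k show "set (htgt H (map fe es ! k)) \<inter> set (hsrc H (map fe es ! Suc k)) \<noteq> {}"
    by auto
qed

lemma hom_path_from_to:
  assumes "hom G H fv fe" "path_from_to G es v w"
  shows "path_from_to H (map fe es) (fv v) (fv w)"
proof -
  have "es \<noteq> []" "set es \<subseteq> hE G"
    using assms(2) unfolding path_from_to_def is_path_def by auto
  then have "es \<noteq> []" "hd es \<in> hE G" "last es \<in> hE G"
    using hd_in_set last_in_set by blast+
  then show ?thesis
    using assms hom_is_path[OF assms(1)] unfolding path_from_to_def hom_def by (auto simp: hd_map last_map)
qed

lemma hom_is_cycle:
  assumes "hom G H fv fe" "is_cycle G es"
  shows "is_cycle H (map fe es)"
proof -
  have "es \<noteq> []" "set es \<subseteq> hE G"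
    using assms(2) unfolding is_cycle_def is_path_def by auto
  then have "es \<noteq> []" "hd es \<in> hE G" "last es \<in> hE G"
    using hd_in_set last_in_set by blast+
  then show ?thesis
    using assms hom_is_path[OF assms(1)] unfolding is_cycle_def hom_def by (auto simp: hd_map last_map)
qed

lemma ma_if_edge_injective_hom:
  assumes "hom G H fv fe" "inj_on fe (hE G)" "finite (hE H)" "ma H"
  shows "ma G"
  unfolding ma_def
proof (intro conjI allI ballI)
  show "\<not> is_cycle G es" for es
    using hom_is_cycle[OF assms(1)] assms(4) unfolding ma_def by blast
  fix v
  assume "v \<in> hV G"
  then have "fv v \<in> hV H"
    using assms(1) unfolding hom_def by auto
  then show "indeg G v \<le> 1" "outdeg G v \<le> 1"
    using indeg_le_hom[OF assms(1-3), of v] outdeg_le_hom[OF assms(1-3), of v] assms(4)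
    unfolding ma_def by fastforce+
qed

section \<open>Pushout complements of matches\<close>

definition match_complement :: "('a, 'b, 'l) hg \<Rightarrow> ('v, 'e, 'l) hg \<Rightarrow> ('v \<Rightarrow> 'a) \<Rightarrow> ('e \<Rightarrow> 'b) \<Rightarrow> 'v set
    \<Rightarrow> ('a, 'b, 'l) hg" where
  "match_complement S L mv me B = S\<lparr>hV := hV S - mv ` (hV L - B), hE := hE S - me ` hE L\<rparr>"

lemma match_complement_simps [simp]:
  "hV (match_complement S L mv me B) = hV S - mv ` (hV L - B)"
  "hE (match_complement S L mv me B) = hE S - me ` hE L"
  "hsrc (match_complement S L mv me B) = hsrc S"
  "htgt (match_complement S L mv me B) = htgt S"
  "hlab (match_complement S L mv me B) = hlab S"
  by (simp_all add: match_complement_def)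

lemma match_complement_hg_rev:
  "match_complement (hg_rev S) (hg_rev L) mv me B = hg_rev (match_complement S L mv me B)"
  by (rule hg.equality) (simp_all add: match_complement_def)

lemma pushout_match_complement:
  assumes "mono_hom L S mv me" "inj_on fL A" "fL ` A \<subseteq> hV L"
  shows "pushout_hg (discrete A) L (match_complement S L mv me (fL ` A)) S
           fL (\<lambda>_. undefined) (mv \<circ> fL) (\<lambda>_. undefined) mv me id id"
proof -
  let ?C = "match_complement S L mv me (fL ` A)"
  have m: "hom L S mv me" "inj_on mv (hV L)" "inj_on me (hE L)"
    using assms(1) unfolding mono_hom_def by auto
  then have interface_kept: "mv (fL a) \<in> hV ?C" if "a \<in> A" for a
    using that assms(3) by (auto simp: hom_def dest: inj_onD)
  have nodes: "set_pushout A (hV L) (hV ?C) (hV S) fL (mv \<circ> fL) mv id"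
  proof (rule set_pushoutI)
    show "mv ` hV L \<union> id ` hV ?C = hV S"
      using m(1) by (auto simp: hom_def)
    show "\<exists>a\<in>A. fL a = b \<and> (mv \<circ> fL) a = c" if "b \<in> hV L" "c \<in> hV ?C" "mv b = id c" for b c
      using that by auto
  qed (use m in auto)
  have edges: "set_pushout {} (hE L) (hE ?C) (hE S) (\<lambda>_. undefined) (\<lambda>_. undefined) me id"
    by (rule set_pushoutI) (use m in \<open>auto simp: hom_def\<close>)
  have "hom ?C S id id"
    by (auto simp: hom_def)
  with m(1) nodes edges interface_kept assms(3) show ?thesis
    unfolding pushout_hg_def by (auto simp: hom_discrete)
qed

lemma hyp_match_complement:
  assumes "hyp sig S"
    and "\<And>e x. e \<in> hE S - me ` hE L \<Longrightarrow> x \<in> set (hsrc S e) \<union> set (htgt S e) \<Longrightarrow> x \<notin> mv ` (hV L - B)"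
  shows "hyp sig (match_complement S L mv me B)"
  using assms unfolding hyp_def by auto

section \<open>Pushouts along discrete interfaces\<close>

definition glue_class :: "'k set \<Rightarrow> ('k \<Rightarrow> 'v) \<Rightarrow> ('k \<Rightarrow> 'a) \<Rightarrow> 'v + 'a \<Rightarrow> ('v + 'a) set" where
  "glue_class A f g x = span_equiv A f g `` {x}"

text \<open>Nodes of the pushout are equivalence classes; edges are wrapped as singletons only so that
  the carrier types match those of the result graph in \<open>deriv\<close>.\<close>
definition glue :: "'k set \<Rightarrow> ('v, 'e, 'l) hg \<Rightarrow> ('a, 'b, 'l) hg \<Rightarrow> ('k \<Rightarrow> 'v) \<Rightarrow> ('k \<Rightarrow> 'a)
    \<Rightarrow> (('v + 'a) set, ('e + 'b) set, 'l) hg" where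
  "glue A R C f g =
     \<lparr>hV = glue_class A f g ` (hV R <+> hV C), hE = (\<lambda>x. {x}) ` (hE R <+> hE C),
      hsrc = \<lambda>E. case_sum (map (glue_class A f g \<circ> Inl) \<circ> hsrc R) (map (glue_class A f g \<circ> Inr) \<circ> hsrc C)
                 (the_elem E),
      htgt = \<lambda>E. case_sum (map (glue_class A f g \<circ> Inl) \<circ> htgt R) (map (glue_class A f g \<circ> Inr) \<circ> htgt C)
                 (the_elem E),
      hlab = \<lambda>E. case_sum (hlab R) (hlab C) (the_elem E)\<rparr>"

lemma glue_simps [simp]:
  "hV (glue A R C f g) = glue_class A f g ` (hV R <+> hV C)"
  "hE (glue A R C f g) = (\<lambda>x. {x}) ` (hE R <+> hE C)"
  "hsrc (glue A R C f g) {Inl e} = map (glue_class A f g \<circ> Inl) (hsrc R e)"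
  "hsrc (glue A R C f g) {Inr c} = map (glue_class A f g \<circ> Inr) (hsrc C c)"
  "htgt (glue A R C f g) {Inl e} = map (glue_class A f g \<circ> Inl) (htgt R e)"
  "htgt (glue A R C f g) {Inr c} = map (glue_class A f g \<circ> Inr) (htgt C c)"
  "hlab (glue A R C f g) {Inl e} = hlab R e"
  "hlab (glue A R C f g) {Inr c} = hlab C c"
  by (simp_all add: glue_def)

lemma glue_hg_rev: "glue A (hg_rev R) (hg_rev C) f g = hg_rev (glue A R C f g)"
  by (rule hg.equality) (simp_all add: glue_def cong: sum.case_cong)

lemma glue_edgeE:
  assumes "E \<in> hE (glue A R C f g)"
  obtains (left) e where "e \<in> hE R" "E = {Inl e}" | (right) c where "c \<in> hE C" "E = {Inr c}"
  using assms by auto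

lemma glue_nodeE:
  assumes "t \<in> hV (glue A R C f g)"
  obtains (left) r where "r \<in> hV R" "t = glue_class A f g (Inl r)"
    | (right) x where "x \<in> hV C" "t = glue_class A f g (Inr x)"
  using assms by auto

lemma targets_glue:
  "targets (glue A R C f g) = (glue_class A f g \<circ> Inl) ` targets R \<union> (glue_class A f g \<circ> Inr) ` targets C"
  unfolding targets_def by (fastforce simp: Plus_def)

lemma glue_class_eq_iff: "glue_class A f g x = glue_class A f g y \<longleftrightarrow> (x, y) \<in> span_equiv A f g"
  unfolding glue_class_def using equiv_class_eq_iff[OF equiv_span_equiv, of x y] by blast

lemma glue_class_interface: "a \<in> A \<Longrightarrow> glue_class A f g (Inl (f a)) = glue_class A f g (Inr (g a))"
  unfolding glue_class_eq_iff by (rule r_into_rtrancl) (auto simp: span_rel_def)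

lemma glue_class_Inl_Inr_eqD:
  assumes "inj_on g A" "glue_class A f g (Inl r) = glue_class A f g (Inr x)"
  obtains a where "a \<in> A" "f a = r" "g a = x"
  using span_equiv_InlD[OF assms(1), of r "Inr x" f] assms(2) that unfolding glue_class_eq_iff by auto

lemma glue_class_Inr_Inr_eqD:
  assumes "inj_on g A" "glue_class A f g (Inr x) = glue_class A f g (Inr y)" "x \<noteq> y"
  obtains a a' where "a \<in> A" "a' \<in> A" "g a = x" "g a' = y" "f a = f a'"
  using span_equiv_Inr_InrD[OF assms(1) _ assms(3)] assms(2) that unfolding glue_class_eq_iff by metis

lemma pushout_glue:
  assumes "f ` A \<subseteq> hV R" "g ` A \<subseteq> hV C"
  shows "pushout_hg (discrete A) R C (glue A R C f g) f (\<lambda>_. undefined) g (\<lambda>_. undefined)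
           (glue_class A f g \<circ> Inl) (\<lambda>e. {Inl e}) (glue_class A f g \<circ> Inr) (\<lambda>c. {Inr c})"
proof -
  have "case_sum (glue_class A f g \<circ> Inl) (glue_class A f g \<circ> Inr) = glue_class A f g"
    by (rule ext) (simp split: sum.split)
  then have nodes: "set_pushout A (hV R) (hV C) (hV (glue A R C f g)) f g
      (glue_class A f g \<circ> Inl) (glue_class A f g \<circ> Inr)"
    unfolding set_pushout_iff by (auto simp: glue_class_eq_iff glue_class_interface Plus_def image_Un image_comp)
  have edges: "set_pushout {} (hE R) (hE C) (hE (glue A R C f g)) (\<lambda>_. undefined) (\<lambda>_. undefined)
      (\<lambda>e. {Inl e}) (\<lambda>c. {Inr c})"
    by (rule set_pushoutI) (auto simp: Plus_def inj_on_def)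
  have "hom R (glue A R C f g) (glue_class A f g \<circ> Inl) (\<lambda>e. {Inl e})"
    "hom C (glue A R C f g) (glue_class A f g \<circ> Inr) (\<lambda>c. {Inr c})"
    unfolding hom_def by auto
  with assms nodes edges show ?thesis
    unfolding pushout_hg_def by (simp add: hom_discrete)
qed

lemma hyp_glue:
  assumes "hyp sig R" "hyp sig C"
  shows "hyp sig (glue A R C f g)"
  using assms unfolding hyp_def by (fastforce elim!: glue_edgeE)

lemma glue_edge_injective_hom:
  assumes "hom R T rv re" "hom C T cv ce" "\<And>a. a \<in> A \<Longrightarrow> rv (f a) = cv (g a)"
    and "inj_on re (hE R)" "inj_on ce (hE C)" "\<And>e c. e \<in> hE R \<Longrightarrow> c \<in> hE C \<Longrightarrow> re e \<noteq> ce c"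
  obtains tv te where "hom (glue A R C f g) T tv te" "inj_on te (hE (glue A R C f g))"
proof
  define tv where "tv t = case_sum rv cv (SOME x. x \<in> t)" for t
  define te where "te E = case_sum re ce (the_elem E)" for E
  have tv_class: "tv (glue_class A f g x) = case_sum rv cv x" for x
  proof -
    have "x \<in> glue_class A f g x"
      by (simp add: glue_class_def)
    then have "(SOME y. y \<in> glue_class A f g x) \<in> glue_class A f g x"
      by (rule someI)
    then have "(x, SOME y. y \<in> glue_class A f g x) \<in> span_equiv A f g"
      by (simp add: glue_class_def)
    then have "case_sum rv cv x = case_sum rv cv (SOME y. y \<in> glue_class A f g x)"
      by (rule equiv_closure_fun_eq) (auto simp: span_rel_def assms(3))
    then show ?thesis
      by (simp add: tv_def)
  qed
  then have "tv \<circ> glue_class A f g \<circ> Inl = rv" "tv \<circ> glue_class A f g \<circ> Inr = cv"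
    by (simp_all add: fun_eq_iff)
  then have "map tv (map (glue_class A f g \<circ> Inl) xs) = map rv xs"
    "map tv (map (glue_class A f g \<circ> Inr) ys) = map cv ys" for xs ys
    by (simp_all add: comp_assoc)
  with assms(1,2) show "hom (glue A R C f g) T tv te"
    unfolding hom_def by (auto simp: tv_class te_def)
  show "inj_on te (hE (glue A R C f g))"
  proof (rule inj_onI)
    fix E E'
    assume "E \<in> hE (glue A R C f g)" "E' \<in> hE (glue A R C f g)" "te E = te E'"
    then show "E = E'"
      using inj_onD[OF assms(4)] inj_onD[OF assms(5)] assms(6) by (auto simp: te_def) metis
  qed
qed

section \<open>Inputs of the result of a double pushout step\<close>

locale dpo_inputs =
  fixes L :: "('v, 'e, 'l) hg" and R :: "('w, 'f, 'l) hg" and S :: "('a, 'b, 'l) hg"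
    and mv :: "'v \<Rightarrow> 'a" and me :: "'e \<Rightarrow> 'b"
    and A AI :: "'k set" and fL :: "'k \<Rightarrow> 'v" and fR :: "'k \<Rightarrow> 'w"
  assumes finite_edges: "finite (hE L)" "finite (hE R)" "finite (hE S)"
    and targets_L: "targets L \<subseteq> hV L"
    and match: "mono_hom L S mv me"
    and indeg_S: "\<And>x. x \<in> hV S \<Longrightarrow> indeg S x \<le> 1"
    and inj_fL: "inj_on fL A" and fL_into: "fL ` A \<subseteq> hV L" and fR_into: "fR ` A \<subseteq> hV R"
    and inputs: "AI \<subseteq> A" "fL ` AI = inn L" "fR ` AI = inn R" "inj_on fR AI"
begin

abbreviation "C \<equiv> match_complement S L mv me (fL ` A)"
abbreviation "kv \<equiv> mv \<circ> fL"
abbreviation "cls \<equiv> glue_class A fR kv"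
abbreviation "T \<equiv> glue A R C fR kv"

lemma hom_match: "hom L S mv me" and inj_mv: "inj_on mv (hV L)" and inj_me: "inj_on me (hE L)"
  using match unfolding mono_hom_def by auto

lemma inj_kv: "inj_on kv A"
  using inj_fL inj_on_subset[OF inj_mv fL_into] by (rule comp_inj_on)

lemma fL_in: "a \<in> A \<Longrightarrow> fL a \<in> hV L" and fR_in: "a \<in> A \<Longrightarrow> fR a \<in> hV R"
  using fL_into fR_into by auto

lemma inn_L: "inn L = hV L - targets L" and inn_R: "inn R = hV R - targets R"
  and inn_S: "inn S = hV S - targets S" and inn_T: "inn T = hV T - targets T"
  using finite_edges by (simp_all add: inn_eq)

lemma fL_inn_iff: "a \<in> A \<Longrightarrow> fL a \<in> inn L \<longleftrightarrow> a \<in> AI"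
  using inputs(1,2) inj_onD[OF inj_fL] by blast

lemma match_reflects_inn: "v \<in> hV L \<Longrightarrow> mv v \<in> inn S \<Longrightarrow> v \<in> inn L"
  using indeg_le_hom[OF hom_match inj_me finite_edges(3), of v] unfolding inn_def by auto

lemma kv_inn_S: "a \<in> A \<Longrightarrow> kv a \<in> inn S \<Longrightarrow> a \<in> AI"
  using match_reflects_inn fL_inn_iff fL_in by auto

lemma inn_S_subset_complement: "inn S \<subseteq> hV C"
proof
  fix x
  assume x: "x \<in> inn S"
  have "v \<in> fL ` A" if "v \<in> hV L" "x = mv v" for v
    using match_reflects_inn[OF that(1)] x that(2) inputs(1,2) by blast
  with x show "x \<in> hV C"
    by (auto simp: inn_def)
qed

lemma kv_in_complement: "a \<in> A \<Longrightarrow> kv a \<in> hV C"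
  using fL_in hom_match inj_onD[OF inj_mv] by (auto simp: hom_def)

lemma edge_into_input_in_complement:
  assumes "a \<in> AI" "e \<in> hE S" "kv a \<in> set (htgt S e)"
  shows "e \<in> hE C"
proof (rule ccontr)
  assume "e \<notin> hE C"
  with assms(2) obtain l where l: "l \<in> hE L" "e = me l"
    by auto
  with assms(3) hom_match obtain u where "u \<in> set (htgt L l)" "mv u = mv (fL a)"
    by (auto simp: hom_def)
  moreover have "fL a \<in> hV L" "fL a \<in> inn L"
    using assms(1) inputs(1,2) fL_in by auto
  ultimately have "fL a \<in> targets L"
    using l(1) targets_L inj_onD[OF inj_mv] unfolding targets_def by blast
  with \<open>fL a \<in> inn L\<close> show False
    unfolding inn_L by blast
qed

lemma complement_edge_not_into_noninput:
  assumes "a \<in> A - AI" "c \<in> hE C"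
  shows "kv a \<notin> set (htgt S c)"
proof
  assume in_c: "kv a \<in> set (htgt S c)"
  have "fL a \<in> hV L" "fL a \<notin> inn L"
    using assms(1) fL_in fL_inn_iff by auto
  then obtain l where l: "l \<in> hE L" "fL a \<in> set (htgt L l)"
    unfolding inn_L targets_def by blast
  then have "kv a \<in> set (htgt S (me l))" "me l \<in> hE S"
    using hom_match by (auto simp: hom_def)
  moreover have "kv a \<in> hV S"
    using \<open>fL a \<in> hV L\<close> hom_match by (auto simp: hom_def)
  ultimately have "c = me l"
    using indeg_le_1_target_unique[OF finite_edges(3) indeg_S _ _ in_c] assms(2) by auto
  with assms(2) l(1) show False
    by auto
qed

lemma matched_edge_target_in_complementE:
  assumes "l \<in> hE L" "x \<in> set (htgt S (me l))" "x \<in> hV C"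
  obtains a where "a \<in> A - AI" "x = kv a"
proof -
  obtain u where u: "u \<in> set (htgt L l)" "x = mv u"
    using assms(1,2) hom_match by (auto simp: hom_def)
  then have "u \<in> hV L" "u \<notin> inn L"
    using assms(1) targets_L unfolding inn_L targets_def by auto
  moreover obtain a where "a \<in> A" "fL a = u"
    using assms(3) u(2) \<open>u \<in> hV L\<close> by auto
  ultimately show thesis
    using that fL_inn_iff u(2) by auto
qed

lemma input_in_inn_S:
  assumes "a \<in> AI" "cls (Inr (kv a)) \<notin> targets T"
  shows "kv a \<in> inn S"
proof (rule ccontr)
  assume "kv a \<notin> inn S"
  moreover have "kv a \<in> hV S"
    using assms(1) inputs(1) fL_in hom_match by (auto simp: hom_def)
  ultimately obtain e where "e \<in> hE S" "kv a \<in> set (htgt S e)"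
    unfolding inn_S targets_def by blast
  with assms(1) have "kv a \<in> targets C"
    using edge_into_input_in_complement unfolding targets_def by auto
  with assms(2) show False
    unfolding targets_glue by auto
qed

lemma R_class_non_target_is_input:
  assumes "r \<in> hV R" "cls (Inl r) \<notin> targets T"
  obtains a where "a \<in> AI" "cls (Inl r) = cls (Inr (kv a))"
proof -
  have "r \<notin> targets R"
    using assms(2) unfolding targets_glue by auto
  with assms(1) have "r \<in> fR ` AI"
    unfolding inputs(3) inn_R by blast
  then obtain a where "a \<in> AI" "r = fR a"
    by blast
  with that show thesis
    using inputs(1) glue_class_interface[of a A fR kv] by auto
qed

lemma glue_non_target_cases:
  assumes "t \<in> hV T" "t \<notin> targets T"
  obtains (input_of_S) x where "x \<in> inn S" "t = cls (Inr x)"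
    | (interface_input) a where "a \<in> AI" "t = cls (Inr (kv a))"
  using assms(1)
proof (cases rule: glue_nodeE)
  case (left r)
  with assms(2) show thesis
    using interface_input by (auto elim: R_class_non_target_is_input)
next
  case (right x)
  show thesis
  proof (cases "x \<in> inn S")
    case True
    from True right(2) show thesis
      by (rule input_of_S)
  next
    case False
    with right(1) obtain e where e: "e \<in> hE S" "x \<in> set (htgt S e)"
      unfolding inn_S targets_def by auto
    have "e \<notin> hE C"
    proof
      assume "e \<in> hE C"
      with e(2) have "x \<in> targets C"
        unfolding targets_def by auto
      with right(2) assms(2) show False
        unfolding targets_glue by auto
    qed
    with e obtain l where l: "l \<in> hE L" "x \<in> set (htgt S (me l))"
      by auto
    obtain a where a: "a \<in> A - AI" "x = kv a"
      by (rule matched_edge_target_in_complementE[OF l right(1)])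
    then have t: "t = cls (Inl (fR a))"
      using right(2) glue_class_interface[of a A fR kv] by simp
    obtain a' where a': "a' \<in> AI" "cls (Inl (fR a)) = cls (Inr (kv a'))"
      using R_class_non_target_is_input[OF fR_in] a(1) assms(2) t by blast
    from a'(1) show thesis
      by (rule interface_input) (simp add: t a'(2))
  qed
qed

lemma inn_glue_subset: "inn T \<subseteq> (cls \<circ> Inr) ` inn S"
proof
  fix t
  assume "t \<in> inn T"
  then have t: "t \<in> hV T" "t \<notin> targets T"
    unfolding inn_T by blast+
  then show "t \<in> (cls \<circ> Inr) ` inn S"
  proof (cases rule: glue_non_target_cases)
    case (interface_input a)
    with t(2) have "kv a \<in> inn S"
      using input_in_inn_S by simp
    with interface_input(2) show ?thesis
      by simp
  qed simp
qed

lemma inn_S_class_not_R_target: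
  assumes "x \<in> inn S"
  shows "cls (Inr x) \<notin> (cls \<circ> Inl) ` targets R"
proof
  assume "cls (Inr x) \<in> (cls \<circ> Inl) ` targets R"
  then obtain r where r: "r \<in> targets R" "cls (Inl r) = cls (Inr x)"
    by auto
  obtain a where "a \<in> A" "fR a = r" "kv a = x"
    by (rule glue_class_Inl_Inr_eqD[OF inj_kv r(2)])
  with assms r(1) show False
    using kv_inn_S inputs(3) unfolding inn_R by blast
qed

lemma inn_S_class_not_C_target:
  assumes x: "x \<in> inn S"
  shows "cls (Inr x) \<notin> (cls \<circ> Inr) ` targets C"
proof
  assume "cls (Inr x) \<in> (cls \<circ> Inr) ` targets C"
  then obtain c y where c: "c \<in> hE C" "y \<in> set (htgt S c)" and eq: "cls (Inr x) = cls (Inr y)"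
    unfolding targets_def by auto
  have "x \<noteq> y"
    using x c unfolding inn_S targets_def by auto
  with eq obtain a a' where a: "a \<in> A" "a' \<in> A" "kv a = x" "kv a' = y" "fR a = fR a'"
    by (rule glue_class_Inr_Inr_eqD[OF inj_kv])
  then have "a \<in> AI"
    using kv_inn_S x by blast
  show False
  proof (cases "a' \<in> AI")
    case True
    then show False
      using a \<open>a \<in> AI\<close> \<open>x \<noteq> y\<close> inj_onD[OF inputs(4)] by blast
  next
    case False
    then show False
      using complement_edge_not_into_noninput[of a' c] a c by auto
  qed
qed

lemma inn_glue_supset: "(cls \<circ> Inr) ` inn S \<subseteq> inn T"
proof clarsimp
  fix x
  assume x: "x \<in> inn S"
  then have "cls (Inr x) \<notin> targets T"
    using inn_S_class_not_R_target inn_S_class_not_C_target unfolding targets_glue by blast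
  moreover have "cls (Inr x) \<in> hV T"
    using x inn_S_subset_complement by auto
  ultimately show "cls (Inr x) \<in> inn T"
    unfolding inn_T by blast
qed

lemma inn_glue: "inn T = (cls \<circ> Inr) ` inn S"
  using inn_glue_subset inn_glue_supset by blast

lemma inj_on_inn: "inj_on (cls \<circ> Inr) (inn S)"
proof (rule inj_onI, rule ccontr)
  fix x y
  assume xy: "x \<in> inn S" "y \<in> inn S" "(cls \<circ> Inr) x = (cls \<circ> Inr) y" "x \<noteq> y"
  from xy(3) have "cls (Inr x) = cls (Inr y)"
    by simp
  then obtain a a' where a: "a \<in> A" "a' \<in> A" "kv a = x" "kv a' = y" "fR a = fR a'"
    by (rule glue_class_Inr_Inr_eqD[OF inj_kv _ xy(4)])
  then have "a \<in> AI" "a' \<in> AI"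
    using kv_inn_S xy(1,2) by auto
  with a xy(4) show False
    using inj_onD[OF inputs(4)] by blast
qed

end

section \<open>Lifting a derivation along a gluing of boundary nodes\<close>

text \<open>The assumptions from \<open>convex'\<close> on unpack a derivation from \<open>S'\<close> with match \<open>q \<circ> m\<close>.\<close>
locale derivation_lifting =
  fixes sig :: "('l \<times> nat \<times> nat) set" and \<rho> :: "('k, 'v, 'e, 'l) rule"
    and S :: "('a, 'b, 'l) hg" and mv :: "'v \<Rightarrow> 'a" and me :: "'e \<Rightarrow> 'b"
    and S' :: "('c, 'd, 'l) hg" and qv :: "'a \<Rightarrow> 'c" and qe :: "'b \<Rightarrow> 'd"
    and C' :: "('c, 'd, 'l) hg" and gv :: "'c \<Rightarrow> 'c" and ge :: "'d \<Rightarrow> 'd" and kv' :: "'k + 'k \<Rightarrow> 'c"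
    and T' :: "('t, 'u, 'l) hg" and rv' :: "'v \<Rightarrow> 't" and re' :: "'e \<Rightarrow> 'u"
    and hv' :: "'c \<Rightarrow> 't" and he' :: "'d \<Rightarrow> 'u"
  assumes rule: "left_connected_rule sig \<rho>"
    and S: "hyp sig S" and match: "mono_hom (rL \<rho>) S mv me"
    and S': "hyp sig S'" "ma S'"
    and q: "hom S S' qv qe" "inj_on qe (hE S)"
    and q_glues_boundary: "\<And>x y. x \<in> hV S \<Longrightarrow> y \<in> hV S \<Longrightarrow> qv x = qv y \<Longrightarrow> x \<noteq> y \<Longrightarrow> x \<in> inn S \<union> outn S"
    and convex': "convex_match (rL \<rho>) S' (qv \<circ> mv) (qe \<circ> me)"
    and C': "hyp sig C'"
    and left': "pushout_hg (discrete (rI \<rho> <+> rO \<rho>) :: ('k + 'k, 'e, 'l) hg) (rL \<rho>) C' S'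
                  (case_sum (riL \<rho>) (roL \<rho>)) (\<lambda>_. undefined) kv' (\<lambda>_. undefined) (qv \<circ> mv) (qe \<circ> me) gv ge"
    and right': "pushout_hg (discrete (rI \<rho> <+> rO \<rho>) :: ('k + 'k, 'e, 'l) hg) (rR \<rho>) C' T'
                  (case_sum (riR \<rho>) (roR \<rho>)) (\<lambda>_. undefined) kv' (\<lambda>_. undefined) rv' re' hv' he'"
    and T': "finite (hE T')" "ma T'"
begin

abbreviation "L \<equiv> rL \<rho>"
abbreviation "R \<equiv> rR \<rho>"
abbreviation "A \<equiv> rI \<rho> <+> rO \<rho>"
abbreviation "fL \<equiv> case_sum (riL \<rho>) (roL \<rho>)"
abbreviation "fR \<equiv> case_sum (riR \<rho>) (roR \<rho>)"

lemma hyp_L: "hyp sig L" and hyp_R: "hyp sig R" and inj_fL: "inj_on fL A"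
  using rule unfolding left_connected_rule_def by auto

lemma interface_L: "fL ` Inl ` rI \<rho> = inn L" "fL ` Inr ` rO \<rho> = outn L"
  and interface_R: "fR ` Inl ` rI \<rho> = inn R" "fR ` Inr ` rO \<rho> = outn R"
  and inj_fR: "inj_on fR (Inl ` rI \<rho>)" "inj_on fR (Inr ` rO \<rho>)"
  using rule unfolding left_connected_rule_def ma_cospan_def by (auto simp: image_image inj_on_def)

lemma fL_image: "fL ` A = inn L \<union> outn L"
  by (simp only: Plus_def image_Un interface_L)

lemma fL_into: "fL ` A \<subseteq> hV L"
  using fL_image by (auto simp: inn_def outn_def)

lemma fR_into: "fR ` A \<subseteq> hV R"
proof -
  have "fR ` A = inn R \<union> outn R"
    by (simp only: Plus_def image_Un interface_R)
  then show ?thesis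
    by (auto simp: inn_def outn_def)
qed

lemma ma_S: "ma S"
  using ma_if_edge_injective_hom[OF q] S' unfolding hyp_def by blast

lemma finite_edges: "finite (hE L)" "finite (hE R)" "finite (hE S)"
  using hyp_L hyp_R S unfolding hyp_def by auto

lemma endpoints_L: "targets L \<subseteq> hV L" "targets (hg_rev L) \<subseteq> hV L"
  using hyp_L unfolding hyp_def targets_def by auto

sublocale inputs: dpo_inputs L R S mv me A "Inl ` rI \<rho>" fL fR
  using finite_edges endpoints_L match ma_S interface_L interface_R inj_fL fL_into fR_into inj_fR
  by unfold_locales (auto simp: ma_def)

text \<open>The outputs are the inputs of the reversed hypergraphs.\<close>
sublocale outputs: dpo_inputs "hg_rev L" "hg_rev R" "hg_rev S" mv me A "Inr ` rO \<rho>" fL fR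
  using finite_edges endpoints_L match ma_S interface_L interface_R inj_fL fL_into fR_into inj_fR
  by unfold_locales (auto simp: ma_def)

abbreviation "C \<equiv> inputs.C"
abbreviation "T \<equiv> inputs.T"
abbreviation "kv \<equiv> inputs.kv"
abbreviation "cls \<equiv> inputs.cls"

lemma outn_S_subset_complement: "outn S \<subseteq> hV C"
  using outputs.inn_S_subset_complement by simp

lemma outn_glue: "outn T = (cls \<circ> Inr) ` outn S"
  using outputs.inn_glue by (simp add: match_complement_hg_rev glue_hg_rev)

lemma inj_on_outn: "inj_on (cls \<circ> Inr) (outn S)"
  using outputs.inj_on_inn by simp

lemma left'_nodes: "set_pushout A (hV L) (hV C') (hV S') fL kv' (qv \<circ> mv) gv"
  and left'_edges: "set_pushout ({} :: 'e set) (hE L) (hE C') (hE S') (\<lambda>_. undefined) (\<lambda>_. undefined) (qe \<circ> me) ge"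
  and hom_g: "hom C' S' gv ge"
  and kv'_into: "kv' ` A \<subseteq> hV C'"
  using left' unfolding pushout_hg_def by (auto simp: hom_discrete)

lemma right'_nodes: "set_pushout A (hV R) (hV C') (hV T') fR kv' rv' hv'"
  and right'_edges: "set_pushout ({} :: 'e set) (hE R) (hE C') (hE T') (\<lambda>_. undefined) (\<lambda>_. undefined) re' he'"
  and hom_rv': "hom R T' rv' re'" and hom_hv': "hom C' T' hv' he'"
  using right' unfolding pushout_hg_def by auto

lemma inj_gv: "inj_on gv (hV C')"
  using set_pushout_inj_on_right[OF left'_nodes inj_fL] .

lemma inj_ge: "inj_on ge (hE C')"
  using set_pushout_empty(2)[OF left'_edges] .

lemma q_complement_edge_image:
  assumes e: "e \<in> hE C"
  shows "qe e \<in> ge ` hE C'"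
proof -
  have "qe e \<notin> (qe \<circ> me) ` hE L"
  proof
    assume "qe e \<in> (qe \<circ> me) ` hE L"
    then obtain l where l: "l \<in> hE L" "qe e = qe (me l)"
      by auto
    moreover have "me l \<in> hE S"
      using inputs.hom_match l(1) by (auto simp: hom_def)
    ultimately have "e = me l"
      using e inj_onD[OF q(2)] by auto
    with e l(1) show False
      by auto
  qed
  moreover have "qe e \<in> hE S'"
    using e q(1) by (auto simp: hom_def)
  ultimately show ?thesis
    using set_pushout_jointly_surj[OF left'_edges] by auto
qed

lemma q_complement_node_image:
  assumes x: "x \<in> hV C"
  shows "qv x \<in> gv ` hV C'"
proof (rule ccontr)
  assume "qv x \<notin> gv ` hV C'"
  moreover have "qv x \<in> hV S'"
    using x q(1) by (auto simp: hom_def)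
  ultimately obtain v where v: "v \<in> hV L" "qv x = qv (mv v)"
    using set_pushout_jointly_surj[OF left'_nodes] by auto
  have "v \<in> fL ` A"
  proof (cases "x = mv v")
    case True
    with x v(1) show ?thesis
      by auto
  next
    case False
    then have "mv v \<in> inn S \<union> outn S"
      using q_glues_boundary[of "mv v" x] v x inputs.hom_match by (auto simp: hom_def)
    then have "v \<in> inn L \<union> outn L"
      using inputs.match_reflects_inn outputs.match_reflects_inn v(1) by auto
    then show ?thesis
      using fL_image by simp
  qed
  then obtain a where "a \<in> A" "v = fL a"
    by blast
  then have "qv x = gv (kv' a)" "kv' a \<in> hV C'"
    using v(2) set_pushout_commutes[OF left'_nodes] kv'_into by auto
  with \<open>qv x \<notin> gv ` hV C'\<close> show False
    by auto
qed

definition emb_v :: "'a \<Rightarrow> 'c" where "emb_v = the_inv_into (hV C') gv \<circ> qv"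

definition emb_e :: "'b \<Rightarrow> 'd" where "emb_e = the_inv_into (hE C') ge \<circ> qe"

lemma emb_v: "x \<in> hV C \<Longrightarrow> emb_v x \<in> hV C' \<and> gv (emb_v x) = qv x"
  using q_complement_node_image inj_gv by (simp add: emb_v_def the_inv_into_into f_the_inv_into_f)

lemma emb_e: "e \<in> hE C \<Longrightarrow> emb_e e \<in> hE C' \<and> ge (emb_e e) = qe e"
  using q_complement_edge_image inj_ge by (simp add: emb_e_def the_inv_into_into f_the_inv_into_f)

lemma emb_v_interface:
  assumes a: "a \<in> A"
  shows "emb_v (kv a) = kv' a"
proof -
  have "emb_v (kv a) \<in> hV C'" "gv (emb_v (kv a)) = qv (kv a)"
    using emb_v inputs.kv_in_complement[OF a] by auto
  moreover have "qv (kv a) = gv (kv' a)" "kv' a \<in> hV C'"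
    using set_pushout_commutes[OF left'_nodes a] kv'_into a by auto
  ultimately show ?thesis
    using inj_onD[OF inj_gv] by metis
qed

lemma no_dangling:
  assumes "e \<in> hE S - me ` hE L" "x \<in> set (hsrc S e) \<union> set (htgt S e)"
  shows "x \<notin> mv ` (hV L - fL ` A)"
proof
  assume "x \<in> mv ` (hV L - fL ` A)"
  then obtain v where v: "v \<in> hV L" "v \<notin> fL ` A" "x = mv v"
    by blast
  have e: "e \<in> hE C"
    using assms(1) by simp
  then have e': "emb_e e \<in> hE C'" "ge (emb_e e) = qe e"
    using emb_e by auto
  have "qv x \<in> set (hsrc S' (qe e)) \<union> set (htgt S' (qe e))"
    using assms q(1) by (auto simp: hom_def)
  also have "\<dots> = gv ` (set (hsrc C' (emb_e e)) \<union> set (htgt C' (emb_e e)))"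
    using hom_g e' unfolding hom_def by (metis image_Un set_map)
  finally obtain y where y: "y \<in> set (hsrc C' (emb_e e)) \<union> set (htgt C' (emb_e e))" "qv x = gv y"
    by blast
  have "y \<in> hV C'"
    using C' e'(1) y(1) unfolding hyp_def by auto
  with v y(2) obtain a where "a \<in> A" "fL a = v"
    using set_pushout_cross_eqE[OF left'_nodes v(1)] by auto
  with v(2) show False
    by blast
qed

lemma hyp_C: "hyp sig C"
  using hyp_match_complement[OF S no_dangling] .

lemma hom_emb: "hom C C' emb_v emb_e"
  unfolding hom_def
proof (intro conjI ballI)
  fix e
  assume e: "e \<in> hE C"
  then have e': "emb_e e \<in> hE C'" "ge (emb_e e) = qe e"
    using emb_e by auto
  have ends: "set (hsrc S e) \<subseteq> hV C" "set (htgt S e) \<subseteq> hV C"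
    using hyp_C e unfolding hyp_def by auto
  have lift_list: "ys = map emb_v xs"
    if "set xs \<subseteq> hV C" "set ys \<subseteq> hV C'" "map gv ys = map qv xs" for xs ys
  proof -
    have "map gv (map emb_v xs) = map qv xs" "set (map emb_v xs) \<subseteq> hV C'"
      using that(1) emb_v by auto
    with that(2,3) show ?thesis
      using inj_on_map_eq_map[OF inj_on_subset[OF inj_gv]] by (metis le_sup_iff)
  qed
  have "set (hsrc C' (emb_e e)) \<subseteq> hV C'" "set (htgt C' (emb_e e)) \<subseteq> hV C'"
    using C' e'(1) unfolding hyp_def by auto
  moreover have "map gv (hsrc C' (emb_e e)) = map qv (hsrc S e)"
    "map gv (htgt C' (emb_e e)) = map qv (htgt S e)" "hlab C' (emb_e e) = hlab S e"
    using hom_g q(1) e e' unfolding hom_def by auto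
  ultimately show "hsrc C' (emb_e e) = map emb_v (hsrc C e)" "htgt C' (emb_e e) = map emb_v (htgt C e)"
    "hlab C' (emb_e e) = hlab C e"
    using ends lift_list by auto
  show "emb_e e \<in> hE C'"
    by (rule e'(1))
qed (use emb_v in auto)

lemma convex_match_S: "convex_match L S mv me"
  unfolding convex_match_def
proof (intro conjI allI impI match)
  fix v w es
  assume vw: "v \<in> mv ` hV L \<and> w \<in> mv ` hV L \<and> path_from_to S es v w"
  then have "path_from_to S' (map qe es) (qv v) (qv w)"
    using hom_path_from_to[OF q(1)] by blast
  moreover have "qv v \<in> (qv \<circ> mv) ` hV L" "qv w \<in> (qv \<circ> mv) ` hV L"
    using vw by auto
  ultimately have image: "qe ` set es \<subseteq> (qe \<circ> me) ` hE L"
    using convex' unfolding convex_match_def by (metis set_map)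
  have es: "set es \<subseteq> hE S"
    using vw unfolding path_from_to_def is_path_def by blast
  show "set es \<subseteq> me ` hE L"
  proof
    fix e
    assume "e \<in> set es"
    with image obtain l where l: "l \<in> hE L" "qe e = qe (me l)"
      by force
    moreover have "me l \<in> hE S"
      using inputs.hom_match l(1) by (auto simp: hom_def)
    ultimately have "e = me l"
      using inj_onD[OF q(2)] \<open>e \<in> set es\<close> es by blast
    with l(1) show "e \<in> me ` hE L"
      by blast
  qed
qed

lemma ma_T: "ma T"
proof -
  have inj_re': "inj_on re' (hE R)" and inj_he': "inj_on he' (hE C')"
    and disjoint: "\<And>e c. e \<in> hE R \<Longrightarrow> c \<in> hE C' \<Longrightarrow> re' e \<noteq> he' c"
    using set_pushout_empty[OF right'_edges] by auto
  have "rv' (fR a) = (hv' \<circ> emb_v) (kv a)" if "a \<in> A" for a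
    using set_pushout_commutes[OF right'_nodes that] emb_v_interface[OF that] by simp
  moreover have "inj_on (he' \<circ> emb_e) (hE C)"
  proof (rule inj_onI)
    fix c c'
    assume c: "c \<in> hE C" "c' \<in> hE C" "(he' \<circ> emb_e) c = (he' \<circ> emb_e) c'"
    then have "emb_e c = emb_e c'"
      using emb_e inj_onD[OF inj_he'] by auto
    then have "qe c = qe c'"
      using emb_e c(1,2) by metis
    then show "c = c'"
      using inj_onD[OF q(2)] c(1,2) by auto
  qed
  moreover have "re' e \<noteq> (he' \<circ> emb_e) c" if "e \<in> hE R" "c \<in> hE C" for e c
    using disjoint that emb_e by auto
  ultimately obtain tv te where "hom T T' tv te" "inj_on te (hE T)"
    by (rule glue_edge_injective_hom[OF hom_rv' hom_comp[OF hom_emb hom_hv'] _ inj_re'])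
  then show ?thesis
    using ma_if_edge_injective_hom T' by blast
qed

lemma deriv_S: "deriv sig \<rho> S mv me C id id"
proof -
  have right: "pushout_hg (discrete A :: ('k + 'k, 'e, 'l) hg) R C T fR (\<lambda>_. undefined) kv (\<lambda>_. undefined)
      (cls \<circ> Inl) (\<lambda>e. {Inl e}) (cls \<circ> Inr) (\<lambda>c. {Inr c})"
    by (rule pushout_glue[OF fR_into]) (use inputs.kv_in_complement in auto)
  have cospan: "ma_cospan (inn S) (outn S) T (cls \<circ> Inr \<circ> id) (cls \<circ> Inr \<circ> id)"
    unfolding ma_cospan_def
    using ma_T inputs.inj_on_inn inputs.inn_glue inj_on_outn outn_glue by simp
  have boundary: "\<forall>x\<in>inn S. id x \<in> hV C \<and> id (id x) = x" "\<forall>x\<in>outn S. id x \<in> hV C \<and> id (id x) = x"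
    using inputs.inn_S_subset_complement outn_S_subset_complement by auto
  show ?thesis
    unfolding deriv_def
    by (intro conjI exI[where x = kv] exI[where x = id] exI[where x = T] exI[where x = "cls \<circ> Inr"]
        exI[where x = "\<lambda>c. {Inr c}"] exI[where x = "cls \<circ> Inl"] exI[where x = "\<lambda>e. {Inl e}"]
        S ma_S convex_match_S hyp_C hyp_glue[OF hyp_R hyp_C] pushout_match_complement[OF match inj_fL fL_into]
        right cospan boundary)
qed

end

lemma deriv_lift:
  fixes \<rho> :: "('k, 'v, 'e, 'l) rule" and S :: "('a, 'b, 'l) hg" and C' :: "('c, 'd, 'l) hg"
  assumes "left_connected_rule sig \<rho>" "hyp sig S" "mono_hom (rL \<rho>) S mv me"
    and "hom S S' qv qe" "inj_on qe (hE S)"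
    and "\<And>x y. x \<in> hV S \<Longrightarrow> y \<in> hV S \<Longrightarrow> qv x = qv y \<Longrightarrow> x \<noteq> y \<Longrightarrow> x \<in> inn S \<union> outn S"
    and "deriv sig \<rho> S' (qv \<circ> mv) (qe \<circ> me) C' gv ge"
  obtains C pv pe where "deriv sig \<rho> S mv me C id id" "hom C C' pv pe"
    "\<forall>x\<in>hV C. gv (pv x) = qv x" "\<forall>e\<in>hE C. ge (pe e) = qe e"
proof -
  obtain kv' dn dm hv' he' rv' re' and T' :: "(('v + 'c) set, ('e + 'd) set, 'l) hg" where
    "hyp sig S'" "ma S'" "convex_match (rL \<rho>) S' (qv \<circ> mv) (qe \<circ> me)" "hyp sig C'"
    "pushout_hg (discrete (rI \<rho> <+> rO \<rho>) :: ('k + 'k, 'e, 'l) hg) (rL \<rho>) C' S'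
       (case_sum (riL \<rho>) (roL \<rho>)) (\<lambda>_. undefined) kv' (\<lambda>_. undefined) (qv \<circ> mv) (qe \<circ> me) gv ge"
    "pushout_hg (discrete (rI \<rho> <+> rO \<rho>) :: ('k + 'k, 'e, 'l) hg) (rR \<rho>) C' T'
       (case_sum (riR \<rho>) (roR \<rho>)) (\<lambda>_. undefined) kv' (\<lambda>_. undefined) rv' re' hv' he'"
    "hyp sig T'" "ma_cospan (inn S') (outn S') T' (hv' \<circ> dn) (hv' \<circ> dm)"
    using assms(7) unfolding deriv_def by (elim conjE exE) auto
  then interpret derivation_lifting sig \<rho> S mv me S' qv qe C' gv ge kv' T' rv' re' hv' he'
    using assms(1-6) by unfold_locales (auto simp: hyp_def ma_cospan_def)
  show thesis
    using that[OF deriv_S hom_emb] emb_v emb_e by blast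
qed

lemma factors_through_comp:
  assumes "factors_through L C mv me id id" "hom C C' pv pe"
    and "\<forall>x\<in>hV C. gv (pv x) = qv x" "\<forall>e\<in>hE C. ge (pe e) = qe e"
  shows "factors_through L C' (qv \<circ> mv) (qe \<circ> me) gv ge"
proof -
  obtain hv he where h: "hom L C hv he" "\<forall>v\<in>hV L. hv v = mv v" "\<forall>e\<in>hE L. he e = me e"
    using assms(1) unfolding factors_through_def by auto
  have "\<forall>v\<in>hV L. hv v \<in> hV C" "\<forall>e\<in>hE L. he e \<in> hE C"
    using h(1) unfolding hom_def by auto
  then have "\<forall>v\<in>hV L. gv ((pv \<circ> hv) v) = (qv \<circ> mv) v" "\<forall>e\<in>hE L. ge ((pe \<circ> he) e) = (qe \<circ> me) e"
    using h(2,3) assms(3,4) by auto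
  with hom_comp[OF h(1) assms(2)] show ?thesis
    unfolding factors_through_def by blast
qed

lemma yields_cp_reflect:
  fixes \<rho>1 \<rho>2 :: "('k, 'v, 'e, 'l) rule" and S :: "('a, 'b, 'l) hg" and S' :: "('c, 'd, 'l) hg"
  assumes rules: "left_connected_rule sig \<rho>1" "left_connected_rule sig \<rho>2" and S: "hyp sig S"
    and q: "hom S S' qv qe" "inj_on qe (hE S)"
    and glues_boundary: "\<And>x y. x \<in> hV S \<Longrightarrow> y \<in> hV S \<Longrightarrow> qv x = qv y \<Longrightarrow> x \<noteq> y \<Longrightarrow> x \<in> inn S \<union> outn S"
    and matches: "hom (rL \<rho>1) S m1v m1e" "hom (rL \<rho>2) S m2v m2e"
    and jointly_surj: "hV S = m1v ` hV (rL \<rho>1) \<union> m2v ` hV (rL \<rho>2)" "hE S = m1e ` hE (rL \<rho>1) \<union> m2e ` hE (rL \<rho>2)"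
    and cp': "yields_cp sig \<rho>1 \<rho>2 S' (qv \<circ> m1v) (qe \<circ> m1e) (qv \<circ> m2v) (qe \<circ> m2e)"
  shows "yields_cp sig \<rho>1 \<rho>2 S m1v m1e m2v m2e"
proof -
  obtain C1' g1v g1e C2' g2v g2e where
    mono': "mono_hom (rL \<rho>1) S' (qv \<circ> m1v) (qe \<circ> m1e)" "mono_hom (rL \<rho>2) S' (qv \<circ> m2v) (qe \<circ> m2e)" and
    deriv': "deriv sig \<rho>1 S' (qv \<circ> m1v) (qe \<circ> m1e) C1' g1v g1e" "deriv sig \<rho>2 S' (qv \<circ> m2v) (qe \<circ> m2e) C2' g2v g2e"
    and not_parallel': "\<not> (factors_through (rL \<rho>1) C2' (qv \<circ> m1v) (qe \<circ> m1e) g2v g2e \<and>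
      factors_through (rL \<rho>2) C1' (qv \<circ> m2v) (qe \<circ> m2e) g1v g1e)"
    using cp' unfolding yields_cp_def by (elim conjE exE) (rule that; assumption)
  have mono: "mono_hom (rL \<rho>1) S m1v m1e" "mono_hom (rL \<rho>2) S m2v m2e"
    using mono_hom_if_comp_mono[OF matches(1) mono'(1)] mono_hom_if_comp_mono[OF matches(2) mono'(2)] .
  obtain C1 p1v p1e where C1: "deriv sig \<rho>1 S m1v m1e C1 id id" "hom C1 C1' p1v p1e"
    "\<forall>x\<in>hV C1. g1v (p1v x) = qv x" "\<forall>e\<in>hE C1. g1e (p1e e) = qe e"
    by (rule deriv_lift[OF rules(1) S mono(1) q glues_boundary deriv'(1)])
  obtain C2 p2v p2e where C2: "deriv sig \<rho>2 S m2v m2e C2 id id" "hom C2 C2' p2v p2e"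
    "\<forall>x\<in>hV C2. g2v (p2v x) = qv x" "\<forall>e\<in>hE C2. g2e (p2e e) = qe e"
    by (rule deriv_lift[OF rules(2) S mono(2) q glues_boundary deriv'(2)])
  have "\<not> (factors_through (rL \<rho>1) C2 m1v m1e id id \<and> factors_through (rL \<rho>2) C1 m2v m2e id id)"
  proof
    assume "factors_through (rL \<rho>1) C2 m1v m1e id id \<and> factors_through (rL \<rho>2) C1 m2v m2e id id"
    with not_parallel' show False
      using factors_through_comp[OF _ C2(2-4)] factors_through_comp[OF _ C1(2-4)] by blast
  qed
  moreover have "ma S"
    using C1(1) unfolding deriv_def by blast
  ultimately show ?thesis
    unfolding yields_cp_def using mono S C1(1) C2(1) jointly_surj by blast
qed

lemma hg_sum_simps [simp]: "hV (hg_sum G H) = hV G <+> hV H" "hE (hg_sum G H) = hE G <+> hE H"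
  by (simp_all add: hg_sum_def)

lemma coeq_hg_surj:
  assumes "coeq_hg A B fv fe gv ge Q qv qe"
  shows "qv ` hV B = hV Q" "qe ` hE B = hE Q"
  using assms unfolding coeq_hg_def set_coeq_def by auto

lemma coeq_hg_discrete_inj_on_edges: "coeq_hg (discrete X) B fv fe gv ge Q qv qe \<Longrightarrow> inj_on qe (hE B)"
  unfolding coeq_hg_def set_coeq_def by (auto intro: inj_onI)

lemma set_coeq_identifiedE:
  assumes "set_coeq N B f g Q q" "x \<in> B" "y \<in> B" "q x = q y" "x \<noteq> y"
  obtains n where "n \<in> N" "x = f n \<or> x = g n"
proof -
  let ?R = "{(f n, g n) | n. n \<in> N}"
  have "(x, y) \<in> (?R \<union> ?R\<inverse>)\<^sup>*"
    using assms(1-4) unfolding set_coeq_def Let_def by blast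
  then obtain z where "(x, z) \<in> ?R \<union> ?R\<inverse>"
    using assms(5) by (cases rule: converse_rtranclE) auto
  then show thesis
    using that by auto
qed

lemma node_gluing_glues_boundary:
  assumes "node_gluing_pairs Li Lj S epsv N" "coeq_hg (discrete N) S fst fe snd ge S' qv qe"
    and "x \<in> hV S" "y \<in> hV S" "qv x = qv y" "x \<noteq> y"
  shows "x \<in> inn S \<union> outn S"
proof -
  have "set_coeq N (hV S) fst snd (hV S') qv"
    using assms(2) unfolding coeq_hg_def by simp
  then obtain n where n: "n \<in> N" "x = fst n \<or> x = snd n"
    using assms(3-6) by (rule set_coeq_identifiedE)
  moreover have "fst n \<in> inn S" "snd n \<in> outn S"
    using assms(1) n(1) unfolding node_gluing_pairs_def Let_def by auto
  ultimately show ?thesis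
    by blast
qed

theorem mainTheorem8:
  fixes sig :: "('l \<times> nat \<times> nat) set"
    and \<R> :: "('k, 'v, 'e, 'l) rule set"
    and \<rho>i \<rho>j :: "('k, 'v, 'e, 'l) rule"
    and M :: "('e \<times> 'e) set"
    and S :: "('a, 'b, 'l) hg" and epsv :: "'v + 'v \<Rightarrow> 'a" and epse :: "'e + 'e \<Rightarrow> 'b"
    and N :: "('a \<times> 'a) set"
    and S' :: "('c, 'd, 'l) hg" and eps'v :: "'a \<Rightarrow> 'c" and eps'e :: "'b \<Rightarrow> 'd"
  assumes sys: "left_connected_system sig \<R>"
    and rules: "\<rho>i \<in> \<R>" "\<rho>j \<in> \<R>"
    and M: "edge_gluing_pairs (rL \<rho>i) (rL \<rho>j) M"
    and S: "hyp sig S"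
    and eps: "coeq_hg (gamma (rL \<rho>i) (rL \<rho>j) M) (hg_sum (rL \<rho>i) (rL \<rho>j))
                (Inl \<circ> fst) (Inl \<circ> fst) (Inr \<circ> snd) (Inr \<circ> snd) S epsv epse"
    and N: "node_gluing_pairs (rL \<rho>i) (rL \<rho>j) S epsv N"
    and S': "hyp sig S'"
    and eps': "coeq_hg (discrete N :: ('a \<times> 'a, 'b, 'l) hg) S fst (\<lambda>_. undefined) snd (\<lambda>_. undefined)
                S' eps'v eps'e"
    and cp': "yields_cp sig \<rho>i \<rho>j S'
                (eps'v \<circ> epsv \<circ> Inl) (eps'e \<circ> epse \<circ> Inl) (eps'v \<circ> epsv \<circ> Inr) (eps'e \<circ> epse \<circ> Inr)"
  shows "yields_cp sig \<rho>i \<rho>j S (epsv \<circ> Inl) (epse \<circ> Inl) (epsv \<circ> Inr) (epse \<circ> Inr)"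
proof -
  have rules': "left_connected_rule sig \<rho>i" "left_connected_rule sig \<rho>j"
    using sys rules unfolding left_connected_system_def by auto
  have eps_hom: "hom (hg_sum (rL \<rho>i) (rL \<rho>j)) S epsv epse"
    using eps unfolding coeq_hg_def by blast
  have jointly_surj: "hV S = (epsv \<circ> Inl) ` hV (rL \<rho>i) \<union> (epsv \<circ> Inr) ` hV (rL \<rho>j)"
    "hE S = (epse \<circ> Inl) ` hE (rL \<rho>i) \<union> (epse \<circ> Inr) ` hE (rL \<rho>j)"
    using coeq_hg_surj[OF eps] by (auto simp: Plus_def image_Un image_comp)
  have q: "hom S S' eps'v eps'e"
    using eps' unfolding coeq_hg_def by blast
  show ?thesis
    by (rule yields_cp_reflect[OF rules' S q coeq_hg_discrete_inj_on_edges[OF eps']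
          node_gluing_glues_boundary[OF N eps'] hom_comp[OF hom_Inl eps_hom] hom_comp[OF hom_Inr eps_hom]
          jointly_surj cp'[unfolded comp_assoc]])
qed

end
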